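(* Let $V_1,V_2$ be closed subspaces of a Hilbert space $\mathcal H$, neither of which contains the other, and let $\Sigma$ be the operator on $V_1\oplus V_2$ given by $\Sigma(v_1,v_2)=(P_{V_1}(v_1+v_2),P_{V_2}(v_1+v_2))$. Then $\mathrm{Spec}(\Sigma)\subseteq[1-\cos\angle(V_1,V_2),\,1+\cos\angle(V_1,V_2)]\cup\{0,2\}$, and both points $1\pm\cos\angle(V_1,V_2)$ belong to $\mathrm{Spec}(\Sigma)$.
   Context: $V_1\oplus V_2$ is the external orthogonal direct sum; $P_V$ is the orthogonal projection onto $V$. For closed subspaces $V_1,V_2$ neither of which contains the other, the (Friederichs) angle $\angle(V_1,V_2)\in[0,\pi/2]$ is defined by $\cos\angle(V_1,V_2)=\sup\{|\langle v_1,v_2\rangle| : v_i\in V_i,\ \|v_i\|=1,\ v_i\perp V_1\cap V_2\}$. *)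

theory Defs
  imports "HOL-Analysis.Analysis"
begin

definition orth_proj :: "'a::real_inner set \<Rightarrow> 'a \<Rightarrow> 'a" where
  "orth_proj V x = (THE v. v \<in> V \<and> (\<forall>w\<in>V. inner (x - v) w = 0))"

text \<open>External orthogonal direct sum V1 (+) V2, realised as pairs in 'a \<times> 'a;
  the product norm on 'a \<times> 'a is sqrt(norm a^2 + norm b^2), i.e. the orthogonal sum norm.\<close>
definition dsum :: "'a set \<Rightarrow> 'a set \<Rightarrow> ('a \<times> 'a) set" where
  "dsum V1 V2 = V1 \<times> V2"

definition Sigma_op :: "'a::real_inner set \<Rightarrow> 'a set \<Rightarrow> 'a \<times> 'a \<Rightarrow> 'a \<times> 'a" where
  "Sigma_op V1 V2 = (\<lambda>(v1, v2). (orth_proj V1 (v1 + v2), orth_proj V2 (v1 + v2)))"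

definition op_spectrum :: "'b::real_normed_vector set \<Rightarrow> ('b \<Rightarrow> 'b) \<Rightarrow> real set" where
  "op_spectrum D T = {l. \<not> (bij_betw (\<lambda>x. T x - l *\<^sub>R x) D D \<and>
       (\<exists>C. \<forall>x\<in>D. norm x \<le> C * norm (T x - l *\<^sub>R x)))}"

definition friedrichs_angle :: "'a::real_inner set \<Rightarrow> 'a set \<Rightarrow> real" where
  "friedrichs_angle V1 V2 = arccos (Sup {\<bar>inner v1 v2\<bar> | v1 v2.
      v1 \<in> V1 \<and> v2 \<in> V2 \<and> norm v1 = 1 \<and> norm v2 = 1 \<and>
      (\<forall>w\<in>V1 \<inter> V2. inner v1 w = 0) \<and> (\<forall>w\<in>V1 \<inter> V2. inner v2 w = 0)})"

end

theory Submission
  imports Defs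
begin

text \<open>Write \<open>M = V\<^sub>1 \<inter> V\<^sub>2\<close>, \<open>c = cos \<angle>(V\<^sub>1, V\<^sub>2)\<close> and split \<open>v\<^sub>i = m\<^sub>i + w\<^sub>i\<close> with \<open>m\<^sub>i \<in> M\<close> and
  \<open>w\<^sub>i \<perp> M\<close>. With \<open>t = 1 - \<lambda>\<close>, the vector \<open>(\<Sigma> - \<lambda>)(v\<^sub>1, v\<^sub>2)\<close> splits orthogonally into
  \<open>(t m\<^sub>1 + m\<^sub>2, m\<^sub>1 + t m\<^sub>2)\<close>, which is large unless \<open>\<bar>t\<bar> = 1\<close>, i.e. \<open>\<lambda> \<in> {0, 2}\<close>, and
  \<open>(t w\<^sub>1 + P\<^sub>1 w\<^sub>2, P\<^sub>2 w\<^sub>1 + t w\<^sub>2)\<close>, which is large unless \<open>\<bar>t\<bar> \<le> c\<close>, because \<open>c\<close> is the norm of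
  \<open>P\<^sub>1\<close> on \<open>V\<^sub>2 \<ominus> M\<close> and of \<open>P\<^sub>2\<close> on \<open>V\<^sub>1 \<ominus> M\<close>. Off \<open>[1 - c, 1 + c] \<union> {0, 2}\<close> the self-adjoint
  operator \<open>\<Sigma> - \<lambda>\<close> is therefore bounded below, hence invertible. Conversely, for a unit vector
  \<open>w \<in> V\<^sub>2 \<ominus> M\<close> with \<open>\<parallel>P\<^sub>1 w\<parallel>\<close> close to \<open>c\<close>, the vectors \<open>(P\<^sub>1 w, \<plusminus>c w)\<close> are approximate
  eigenvectors for \<open>1 \<plusminus> c\<close>.\<close>

section \<open>Orthogonal projections\<close>

lemma parallelogram_law:
  fixes a b :: "'a::real_inner"
  shows "(norm (a + b))\<^sup>2 + (norm (a - b))\<^sup>2 = 2 * (norm a)\<^sup>2 + 2 * (norm b)\<^sup>2"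
  by (simp add: power2_norm_eq_inner inner_add_left inner_add_right inner_diff_left inner_diff_right
      inner_commute algebra_simps)

lemma norm_diff_scaleR_power2:
  fixes a b :: "'a::real_inner"
  shows "(norm (a - r *\<^sub>R b))\<^sup>2 = (norm a)\<^sup>2 - 2 * r * inner a b + r\<^sup>2 * (norm b)\<^sup>2"
  by (simp only: power2_norm_eq_inner)
    (simp add: inner_diff_left inner_diff_right inner_commute power2_eq_square algebra_simps)

lemma pythagoras:
  fixes a b :: "'a::real_inner"
  assumes "inner a b = 0"
  shows "(norm (a + b))\<^sup>2 = (norm a)\<^sup>2 + (norm b)\<^sup>2"
  using assms by (simp add: power2_norm_eq_inner inner_add_left inner_add_right inner_commute)

lemma nearest_point_in_subspace_orthogonal:
  assumes "subspace S" "p \<in> S" and nearest: "\<And>s. s \<in> S \<Longrightarrow> norm (x - p) \<le> norm (x - s)"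
    and "w \<in> S"
  shows "inner (x - p) w = 0"
proof -
  define a where "a = inner (x - p) w"
  have "2 * r * a \<le> r\<^sup>2 * (norm w)\<^sup>2" for r
  proof -
    have "p + r *\<^sub>R w \<in> S" using assms by (simp add: subspace_add subspace_scale)
    then have "(norm (x - p))\<^sup>2 \<le> (norm ((x - p) - r *\<^sub>R w))\<^sup>2"
      using nearest by (simp add: algebra_simps power_mono)
    then show ?thesis unfolding a_def norm_diff_scaleR_power2 by simp
  qed
  from this[of "a / (norm w)\<^sup>2"] have "a\<^sup>2 \<le> 0"
    by (cases "w = 0") (auto simp: a_def power2_eq_square field_simps)
  then show ?thesis unfolding a_def by simp
qed

text \<open>Along a minimising sequence the parallelogram law bounds
  \<open>\<parallel>s m - s n\<parallel>\<^sup>2\<close> by the excess of \<open>\<parallel>x - s m\<parallel>\<^sup>2\<close> and \<open>\<parallel>x - s n\<parallel>\<^sup>2\<close> over their infimum, since the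
  midpoint of \<open>s m\<close> and \<open>s n\<close> lies in \<open>S\<close>.\<close>
lemma closed_subspace_nearest_point:
  fixes S :: "'a::{real_inner, complete_space} set"
  assumes S: "subspace S" "closed S"
  obtains p where "p \<in> S" "\<And>s. s \<in> S \<Longrightarrow> norm (x - p) \<le> norm (x - s)"
proof -
  define d where "d = (INF s\<in>S. (norm (x - s))\<^sup>2)"
  have bdd: "bdd_below ((\<lambda>s. (norm (x - s))\<^sup>2) ` S)" by (rule bdd_belowI2[of _ 0]) simp
  have d_le: "d \<le> (norm (x - s))\<^sup>2" if "s \<in> S" for s
    unfolding d_def using bdd that by (rule cINF_lower)
  have "\<exists>s\<in>S. (norm (x - s))\<^sup>2 < d + 1 / Suc n" for n
    using cINF_less_iff[OF _ bdd, of "d + 1 / Suc n"] subspace_0[OF S(1)] by (auto simp: d_def)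
  then obtain s where sS: "\<And>n. s n \<in> S" and s_close: "\<And>n. (norm (x - s n))\<^sup>2 < d + 1 / Suc n"
    by metis
  have s_dist: "(norm (s m - s n))\<^sup>2 \<le> 2 / Suc m + 2 / Suc n" for m n
  proof -
    have "(1/2) *\<^sub>R (s m + s n) \<in> S" using S(1) sS by (simp add: subspace_add subspace_scale)
    then have "d \<le> (norm (x - (1/2) *\<^sub>R (s m + s n)))\<^sup>2" by (rule d_le)
    also have "x - (1/2) *\<^sub>R (s m + s n) = (1/2) *\<^sub>R ((x - s m) + (x - s n))"
      by (simp add: algebra_simps flip: scaleR_add_left)
    finally have "4 * d \<le> (norm ((x - s m) + (x - s n)))\<^sup>2" by (simp add: power2_eq_square)
    moreover have "norm ((x - s m) - (x - s n)) = norm (s m - s n)" by (simp add: norm_minus_commute)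
    ultimately show ?thesis
      using parallelogram_law[of "x - s m" "x - s n"] s_close[of m] s_close[of n] by simp
  qed
  have "Cauchy s"
  proof (rule metric_CauchyI)
    fix e :: real assume "e > 0"
    then obtain M where "inverse (Suc M) < e\<^sup>2 / 4" using reals_Archimedean[of "e\<^sup>2 / 4"] by auto
    then have M: "4 / Suc M < e\<^sup>2" by (simp add: field_simps)
    have "dist (s m) (s n) < e" if "m \<ge> M" "n \<ge> M" for m n
    proof -
      have "2 / Suc m + 2 / Suc n \<le> 2 / Suc M + 2 / Suc M"
        using that by (intro add_mono divide_left_mono) auto
      then have "(dist (s m) (s n))\<^sup>2 < e\<^sup>2" using s_dist[of m n] M by (simp add: dist_norm)
      then show ?thesis using \<open>e > 0\<close> by (auto intro: power_less_imp_less_base)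
    qed
    then show "\<exists>M. \<forall>m\<ge>M. \<forall>n\<ge>M. dist (s m) (s n) < e" by blast
  qed
  then obtain p where p: "s \<longlonglongrightarrow> p" using Cauchy_convergent convergent_def by blast
  have "p \<in> S" using closed_sequentially[OF S(2)] sS p by blast
  moreover have "(norm (x - p))\<^sup>2 \<le> d"
  proof (rule LIMSEQ_le)
    show "(\<lambda>n. (norm (x - s n))\<^sup>2) \<longlonglongrightarrow> (norm (x - p))\<^sup>2" by (intro tendsto_intros p)
    show "(\<lambda>n. d + 1 / Suc n) \<longlonglongrightarrow> d"
      using tendsto_add[OF tendsto_const LIMSEQ_Suc[OF lim_inverse_n']] by (simp add: inverse_eq_divide)
  qed (use s_close less_imp_le in blast)
  moreover have "norm (x - p) \<le> norm (x - s)" if "s \<in> S" "(norm (x - p))\<^sup>2 \<le> d" for s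
    using order_trans[OF that(2) d_le[OF that(1)]] by (rule power2_le_imp_le) simp
  ultimately show thesis by (intro that)
qed

lemma orthogonal_decomposition_unique:
  assumes "subspace S" "p \<in> S" "q \<in> S"
    and "\<forall>w\<in>S. inner (x - p) w = 0" "\<forall>w\<in>S. inner (x - q) w = 0"
  shows "p = q"
proof -
  have "p - q \<in> S" using assms by (simp add: subspace_diff)
  then have "inner (x - q) (p - q) - inner (x - p) (p - q) = 0" using assms by auto
  moreover have "inner (x - q) (p - q) - inner (x - p) (p - q) = inner (p - q) (p - q)"
    by (simp add: inner_diff_left)
  ultimately show ?thesis by simp
qed

context
  fixes S :: "'a::{real_inner, complete_space} set"
  assumes S: "subspace S" "closed S"
begin

lemma orth_proj_in_orthogonal: "orth_proj S x \<in> S \<and> (\<forall>w\<in>S. inner (x - orth_proj S x) w = 0)"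
proof -
  obtain p where "p \<in> S" "\<And>s. s \<in> S \<Longrightarrow> norm (x - p) \<le> norm (x - s)"
    using closed_subspace_nearest_point[OF S] by blast
  then have "\<exists>!v. v \<in> S \<and> (\<forall>w\<in>S. inner (x - v) w = 0)"
    using nearest_point_in_subspace_orthogonal[OF S(1)] orthogonal_decomposition_unique[OF S(1)]
    by blast
  then show ?thesis unfolding orth_proj_def by (rule theI')
qed

lemma orth_proj_in: "orth_proj S x \<in> S"
  using orth_proj_in_orthogonal by blast

lemma orth_proj_inner: "y \<in> S \<Longrightarrow> inner (orth_proj S x) y = inner x y"
  using orth_proj_in_orthogonal[of x] by (simp add: inner_diff_left)

lemma orth_proj_eqI:
  assumes "v \<in> S" "\<And>w. w \<in> S \<Longrightarrow> inner v w = inner x w"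
  shows "orth_proj S x = v"
proof (rule orthogonal_decomposition_unique[OF S(1) orth_proj_in assms(1)])
  show "\<forall>w\<in>S. inner (x - orth_proj S x) w = 0" using orth_proj_in_orthogonal by blast
  show "\<forall>w\<in>S. inner (x - v) w = 0" using assms(2) by (simp add: inner_diff_left)
qed

lemma orth_proj_id: "v \<in> S \<Longrightarrow> orth_proj S v = v"
  by (rule orth_proj_eqI) auto

lemma orth_proj_add: "orth_proj S (x + y) = orth_proj S x + orth_proj S y"
  by (rule orth_proj_eqI) (auto simp: S(1) subspace_add orth_proj_in orth_proj_inner inner_add_left)

lemma orth_proj_scaleR: "orth_proj S (r *\<^sub>R x) = r *\<^sub>R orth_proj S x"
  by (rule orth_proj_eqI) (auto simp: S(1) subspace_scale orth_proj_in orth_proj_inner)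

lemma orth_proj_orthogonal_complement:
  "\<forall>w\<in>M. inner v w = 0 \<Longrightarrow> M \<subseteq> S \<Longrightarrow> \<forall>w\<in>M. inner (orth_proj S v) w = 0"
  using orth_proj_inner by auto

lemma norm_orth_proj_power2: "(norm (orth_proj S x))\<^sup>2 = inner (orth_proj S x) x"
  using orth_proj_inner[OF orth_proj_in, of x x] by (simp add: power2_norm_eq_inner inner_commute)

lemma norm_orth_proj_le: "norm (orth_proj S x) \<le> norm x"
proof -
  have "norm (orth_proj S x) * norm (orth_proj S x) \<le> norm (orth_proj S x) * norm x"
    using norm_orth_proj_power2[of x] Cauchy_Schwarz_ineq2[of "orth_proj S x" x]
    by (simp add: power2_eq_square)
  then show ?thesis by (cases "orth_proj S x = 0") auto
qed

lemma bounded_linear_orth_proj: "bounded_linear (orth_proj S)"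
  by (rule bounded_linear_intro[where K = 1])
    (simp_all add: orth_proj_add orth_proj_scaleR norm_orth_proj_le)

end

section \<open>The Friedrichs cosine\<close>

definition friedrichs_cosines :: "'a::real_inner set \<Rightarrow> 'a set \<Rightarrow> real set" where
  "friedrichs_cosines V1 V2 = {\<bar>inner v1 v2\<bar> | v1 v2.
      v1 \<in> V1 \<and> v2 \<in> V2 \<and> norm v1 = 1 \<and> norm v2 = 1 \<and>
      (\<forall>w\<in>V1 \<inter> V2. inner v1 w = 0) \<and> (\<forall>w\<in>V1 \<inter> V2. inner v2 w = 0)}"

definition friedrichs_cos :: "'a::real_inner set \<Rightarrow> 'a set \<Rightarrow> real" where
  "friedrichs_cos V1 V2 = Sup (friedrichs_cosines V1 V2)"

lemma friedrichs_cosines_commute: "friedrichs_cosines V2 V1 = friedrichs_cosines V1 V2"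
proof -
  have "friedrichs_cosines B A \<subseteq> friedrichs_cosines A B" for A B :: "'a set"
    unfolding friedrichs_cosines_def by (force simp: Int_commute inner_commute)
  then show ?thesis by blast
qed

lemma friedrichs_cos_commute: "friedrichs_cos V2 V1 = friedrichs_cos V1 V2"
  by (simp add: friedrichs_cos_def friedrichs_cosines_commute)

lemma friedrichs_cosines_bounds:
  fixes V1 V2 :: "'a::real_inner set"
  assumes "x \<in> friedrichs_cosines V1 V2"
  shows "0 \<le> x" "x \<le> 1"
proof -
  obtain v1 v2 :: 'a where "x = \<bar>inner v1 v2\<bar>" "norm v1 = 1" "norm v2 = 1"
    using assms unfolding friedrichs_cosines_def by blast
  then show "0 \<le> x" "x \<le> 1" using Cauchy_Schwarz_ineq2[of v1 v2] by simp_all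
qed

lemma bdd_above_friedrichs_cosines: "bdd_above (friedrichs_cosines V1 V2)"
  using friedrichs_cosines_bounds(2) by (rule bdd_aboveI)

lemma friedrichs_cos_bounds:
  assumes "friedrichs_cosines V1 V2 \<noteq> {}"
  shows "0 \<le> friedrichs_cos V1 V2" "friedrichs_cos V1 V2 \<le> 1"
proof -
  obtain x where "x \<in> friedrichs_cosines V1 V2" using assms by blast
  then show "0 \<le> friedrichs_cos V1 V2" unfolding friedrichs_cos_def
    using friedrichs_cosines_bounds(1) bdd_above_friedrichs_cosines by (blast intro: cSup_upper2)
  show "friedrichs_cos V1 V2 \<le> 1" unfolding friedrichs_cos_def
    using assms friedrichs_cosines_bounds(2) by (rule cSup_least)
qed

lemma cos_friedrichs_angle:
  "friedrichs_cosines V1 V2 \<noteq> {} \<Longrightarrow> cos (friedrichs_angle V1 V2) = friedrichs_cos V1 V2"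
  using friedrichs_cos_bounds[of V1 V2]
  by (simp add: friedrichs_angle_def friedrichs_cos_def friedrichs_cosines_def)

lemma unit_vector_orthogonal_to_Int:
  fixes A B :: "'a::{real_inner, complete_space} set"
  assumes "subspace A" "subspace B" "closed A" "closed B" "\<not> A \<subseteq> B"
  obtains u where "u \<in> A" "norm u = 1" "\<forall>w\<in>A \<inter> B. inner u w = 0"
proof -
  have M: "subspace (A \<inter> B)" "closed (A \<inter> B)" using assms by (auto simp: subspace_inter)
  obtain a where a: "a \<in> A" "a \<notin> B" using assms(5) by blast
  define w where "w = a - orth_proj (A \<inter> B) a"
  have "orth_proj (A \<inter> B) a \<in> A \<inter> B" by (rule orth_proj_in[OF M])
  then have w: "w \<in> A" "w \<noteq> 0" using a assms(1) by (auto simp: w_def subspace_diff)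
  have "\<forall>m\<in>A \<inter> B. inner w m = 0" using orth_proj_inner[OF M] by (simp add: w_def inner_diff_left)
  then show thesis using w assms(1) by (intro that[of "w /\<^sub>R norm w"]) (auto simp: subspace_scale)
qed

lemma friedrichs_cosines_nonempty:
  fixes V1 V2 :: "'a::{real_inner, complete_space} set"
  assumes "subspace V1" "closed V1" "subspace V2" "closed V2" "\<not> V1 \<subseteq> V2" "\<not> V2 \<subseteq> V1"
  shows "friedrichs_cosines V1 V2 \<noteq> {}"
proof -
  obtain u1 where "u1 \<in> V1" "norm u1 = 1" "\<forall>w\<in>V1 \<inter> V2. inner u1 w = 0"
    using unit_vector_orthogonal_to_Int[of V1 V2] assms by blast
  moreover obtain u2 where "u2 \<in> V2" "norm u2 = 1" "\<forall>w\<in>V1 \<inter> V2. inner u2 w = 0"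
    using unit_vector_orthogonal_to_Int[of V2 V1] assms by (auto simp: Int_commute)
  ultimately have "\<bar>inner u1 u2\<bar> \<in> friedrichs_cosines V1 V2"
    unfolding friedrichs_cosines_def by blast
  then show ?thesis by blast
qed

text \<open>The Friedrichs cosine is the norm of \<open>P\<^sub>A\<close> on \<open>B \<ominus> (A \<inter> B)\<close>; this lemma and
  \<open>friedrichs_cos_approx\<close> are the two halves of that statement.\<close>
lemma norm_orth_proj_le_friedrichs_cos:
  fixes A B :: "'a::{real_inner, complete_space} set"
  assumes A: "subspace A" "closed A" and B: "subspace B"
    and ne: "friedrichs_cosines A B \<noteq> {}"
    and v: "v \<in> B" "\<forall>w\<in>A \<inter> B. inner v w = 0"
  shows "norm (orth_proj A v) \<le> friedrichs_cos A B * norm v"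
proof (cases "orth_proj A v = 0 \<or> v = 0")
  case True
  then show ?thesis
    using friedrichs_cos_bounds(1)[OF ne] norm_orth_proj_le[OF A, of v] by auto
next
  case False
  let ?u = "orth_proj A v"
  have "\<bar>inner (?u /\<^sub>R norm ?u) (v /\<^sub>R norm v)\<bar> \<in> friedrichs_cosines A B"
    unfolding friedrichs_cosines_def
  proof (intro CollectI exI conjI)
    show "?u /\<^sub>R norm ?u \<in> A" using A(1) orth_proj_in[OF A] by (simp add: subspace_scale)
    show "v /\<^sub>R norm v \<in> B" using B v(1) by (simp add: subspace_scale)
    show "\<forall>w\<in>A \<inter> B. inner (?u /\<^sub>R norm ?u) w = 0"
      using orth_proj_orthogonal_complement[OF A v(2)] by simp
  qed (use False v(2) in auto)
  then have "\<bar>inner (?u /\<^sub>R norm ?u) (v /\<^sub>R norm v)\<bar> \<le> friedrichs_cos A B"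
    unfolding friedrichs_cos_def using bdd_above_friedrichs_cosines by (rule cSup_upper)
  moreover have "\<bar>inner (?u /\<^sub>R norm ?u) (v /\<^sub>R norm v)\<bar> = norm ?u / norm v"
    using False by (simp add: norm_orth_proj_power2[OF A, symmetric] power2_eq_square field_simps)
  ultimately show ?thesis
    using False by (simp add: divide_le_eq)
qed

lemma norm_orth_proj_le_friedrichs_cos':
  fixes A B :: "'a::{real_inner, complete_space} set"
  assumes "subspace A" and B: "subspace B" "closed B"
    and ne: "friedrichs_cosines A B \<noteq> {}"
    and v: "v \<in> A" "\<forall>w\<in>A \<inter> B. inner v w = 0"
  shows "norm (orth_proj B v) \<le> friedrichs_cos A B * norm v"
  using norm_orth_proj_le_friedrichs_cos[OF B assms(1), of v] assms
  by (simp add: friedrichs_cosines_commute friedrichs_cos_commute Int_commute)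

lemma friedrichs_cos_approx:
  fixes A B :: "'a::{real_inner, complete_space} set"
  assumes A: "subspace A" "closed A"
    and ne: "friedrichs_cosines A B \<noteq> {}" and "\<eta> > 0"
  obtains w where "w \<in> B" "norm w = 1" "\<forall>m\<in>A \<inter> B. inner w m = 0"
    "friedrichs_cos A B - \<eta> < norm (orth_proj A w)"
proof -
  have "friedrichs_cos A B - \<eta> < Sup (friedrichs_cosines A B)"
    using \<open>\<eta> > 0\<close> by (simp add: friedrichs_cos_def)
  then obtain x where "x \<in> friedrichs_cosines A B" "friedrichs_cos A B - \<eta> < x"
    using less_cSup_iff[OF ne bdd_above_friedrichs_cosines] by blast
  then obtain v w where vw: "friedrichs_cos A B - \<eta> < \<bar>inner v w\<bar>" "v \<in> A" "w \<in> B"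
    "norm v = 1" "norm w = 1" "\<forall>m\<in>A \<inter> B. inner w m = 0"
    unfolding friedrichs_cosines_def by blast
  have "\<bar>inner v w\<bar> = \<bar>inner (orth_proj A w) v\<bar>"
    using orth_proj_inner[OF A vw(2)] by (simp add: inner_commute)
  also have "\<dots> \<le> norm (orth_proj A w)"
    using Cauchy_Schwarz_ineq2[of "orth_proj A w" v] vw(4) by simp
  finally show thesis using vw by (intro that) auto
qed

section \<open>Spectra of self-adjoint operators\<close>

text \<open>A bounded-below self-adjoint operator has closed range, and the orthogonal complement of
  its range is its kernel, which is trivial.\<close>
lemma selfadjoint_bounded_below_bij_betw:
  fixes T :: "'a::{real_inner, complete_space} \<Rightarrow> 'a"
  assumes D: "subspace D" "closed D" and T: "bounded_linear T" "T ` D \<subseteq> D"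
    and selfadjoint: "\<And>x y. x \<in> D \<Longrightarrow> y \<in> D \<Longrightarrow> inner (T x) y = inner x (T y)"
    and C: "C > 0" "\<And>x. x \<in> D \<Longrightarrow> norm x \<le> C * norm (T x)"
  shows "bij_betw T D D"
proof -
  interpret bounded_linear T by (rule T(1))
  have kernel: "x = 0" if "x \<in> D" "T x = 0" for x
    using C(2)[OF that(1)] that(2) by simp
  have "inj_on T D"
  proof (rule inj_onI)
    fix x y assume "x \<in> D" "y \<in> D" "T x = T y"
    then show "x = y" using kernel[of "x - y"] D(1) by (simp add: subspace_diff diff)
  qed
  moreover have "T ` D = D"
  proof
    show "T ` D \<subseteq> D" by (rule T(2))
    define R where "R = T ` D"
    have R: "subspace R" "closed R"
    proof -
      show "subspace R" unfolding R_def by (rule linear_subspace_image[OF linear_axioms D(1)])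
      have "complete R" unfolding R_def
      proof (rule complete_isometric_image[of "1 / C"])
        show "\<forall>x\<in>D. 1 / C * norm x \<le> norm (T x)" using C by (simp add: field_simps)
      qed (use C D in \<open>auto simp: complete_eq_closed T(1)\<close>)
      then show "closed R" by (rule complete_imp_closed)
    qed
    show "D \<subseteq> T ` D"
    proof
      fix y assume "y \<in> D"
      define z where "z = y - orth_proj R y"
      have "orth_proj R y \<in> D" using orth_proj_in[OF R] T(2) R_def by blast
      then have zD: "z \<in> D" using \<open>y \<in> D\<close> D(1) by (simp add: z_def subspace_diff)
      then have "T (T z) \<in> R" using T(2) R_def by blast
      then have "inner z (T (T z)) = 0"
        using orth_proj_inner[OF R, of "T (T z)" y] by (simp add: z_def inner_diff_left)
      moreover have "T z \<in> D" using zD T(2) by blast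
      ultimately have "T z = 0" using selfadjoint[of "T z" z] zD by (simp add: inner_commute)
      then have "y = orth_proj R y" using kernel[OF zD] by (simp add: z_def)
      then show "y \<in> T ` D" using orth_proj_in[OF R] R_def by metis
    qed
  qed
  ultimately show ?thesis by (simp add: bij_betw_def)
qed

lemma not_in_op_spectrumI:
  fixes T :: "'a::{real_inner, complete_space} \<Rightarrow> 'a"
  assumes D: "subspace D" "closed D" and T: "bounded_linear T" "T ` D \<subseteq> D"
    and selfadjoint: "\<And>x y. x \<in> D \<Longrightarrow> y \<in> D \<Longrightarrow> inner (T x) y = inner x (T y)"
    and C: "\<And>x. x \<in> D \<Longrightarrow> norm x \<le> C * norm (T x - l *\<^sub>R x)"
  shows "l \<notin> op_spectrum D T"
proof -
  let ?S = "\<lambda>x. T x - l *\<^sub>R x"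
  have "bij_betw ?S D D"
  proof (rule selfadjoint_bounded_below_bij_betw[OF D, of _ "max C 1"])
    show "bounded_linear ?S" by (intro bounded_linear_sub T(1) bounded_linear_scaleR_right)
    show "?S ` D \<subseteq> D" using T(2) D(1) by (auto simp: subspace_diff subspace_scale)
    show "inner (?S x) y = inner x (?S y)" if "x \<in> D" "y \<in> D" for x y
      using selfadjoint[OF that] by (simp add: inner_diff_left inner_diff_right inner_commute)
    show "norm x \<le> max C 1 * norm (?S x)" if "x \<in> D" for x
      using C[OF that] mult_right_mono[of C "max C 1" "norm (?S x)"] by simp
  qed simp
  then show ?thesis unfolding op_spectrum_def using C by blast
qed

lemma in_op_spectrumI:
  assumes "\<And>e. e > 0 \<Longrightarrow> \<exists>x\<in>D. norm (T x - l *\<^sub>R x) < e * norm x"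
  shows "l \<in> op_spectrum D T"
proof -
  have "\<not> (\<forall>x\<in>D. norm x \<le> C * norm (T x - l *\<^sub>R x))" for C
  proof -
    have "0 < \<bar>C\<bar> + 1" by simp
    then obtain x where x: "x \<in> D" "norm (T x - l *\<^sub>R x) < norm x / (\<bar>C\<bar> + 1)"
      using assms[of "1 / (\<bar>C\<bar> + 1)"] by auto
    have "C * norm (T x - l *\<^sub>R x) \<le> (\<bar>C\<bar> + 1) * norm (T x - l *\<^sub>R x)"
      by (intro mult_right_mono) auto
    also have "\<dots> < norm x" using x(2) by (simp add: field_simps)
    finally show ?thesis using x(1) by (metis not_le)
  qed
  then show ?thesis unfolding op_spectrum_def by blast
qed

section \<open>The operator \<open>\<Sigma>\<close>\<close>

lemma norm_scaleR_add_swap_power2_ge: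
  fixes a b :: "'a::real_inner"
  shows "(\<bar>t\<bar> - 1)\<^sup>2 * ((norm a)\<^sup>2 + (norm b)\<^sup>2) \<le> (norm (t *\<^sub>R a + b))\<^sup>2 + (norm (a + t *\<^sub>R b))\<^sup>2"
proof -
  define N where "N = (norm a)\<^sup>2 + (norm b)\<^sup>2"
  have expand: "(norm (t *\<^sub>R a + b))\<^sup>2 + (norm (a + t *\<^sub>R b))\<^sup>2 = (t\<^sup>2 + 1) * N + 4 * t * inner a b"
    unfolding N_def by (simp only: power2_norm_eq_inner)
      (simp add: inner_add_left inner_add_right inner_commute algebra_simps power2_eq_square)
  have "\<bar>inner a b\<bar> \<le> norm a * norm b" by (rule Cauchy_Schwarz_ineq2)
  also have "2 * (norm a * norm b) \<le> N"
    using sum_squares_bound[of "norm a" "norm b"] by (simp add: N_def algebra_simps)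
  finally have "\<bar>t\<bar> * (2 * \<bar>inner a b\<bar>) \<le> \<bar>t\<bar> * N"
    by (intro mult_left_mono) auto
  moreover have "- (t * inner a b) \<le> \<bar>t\<bar> * \<bar>inner a b\<bar>"
    using abs_ge_minus_self[of "t * inner a b"] by (simp add: abs_mult)
  ultimately have "- (4 * t * inner a b) \<le> 2 * \<bar>t\<bar> * N" by linarith
  moreover have "(\<bar>t\<bar> - 1)\<^sup>2 * N = (t\<^sup>2 + 1) * N - 2 * \<bar>t\<bar> * N"
    by (simp add: power2_eq_square algebra_simps abs_mult_self_eq)
  ultimately show ?thesis unfolding expand N_def[symmetric] by linarith
qed

lemma norm_scaleR_add_perturbed_power2_ge:
  fixes a b p q :: "'a::real_inner"
  assumes p: "norm p \<le> c * norm b" and q: "norm q \<le> c * norm a" and c: "0 \<le> c" "c < \<bar>t\<bar>"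
  shows "(\<bar>t\<bar> - c)\<^sup>2 / 2 * ((norm a)\<^sup>2 + (norm b)\<^sup>2)
    \<le> (norm (t *\<^sub>R a + p))\<^sup>2 + (norm (q + t *\<^sub>R b))\<^sup>2"
proof -
  have larger: "(\<bar>t\<bar> - c)\<^sup>2 / 2 * ((norm y)\<^sup>2 + (norm z)\<^sup>2) \<le> (norm (t *\<^sub>R y + r))\<^sup>2"
    if "norm r \<le> c * norm z" "norm z \<le> norm y" for y z r :: 'a
  proof -
    have "norm (t *\<^sub>R y) - norm r \<le> norm (t *\<^sub>R y + r)"
      using norm_triangle_ineq[of "t *\<^sub>R y + r" "- r"] by simp
    moreover have "c * norm z \<le> c * norm y" using that c by (intro mult_left_mono) auto
    ultimately have "(\<bar>t\<bar> - c) * norm y \<le> norm (t *\<^sub>R y + r)" using that by (simp add: algebra_simps)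
    then have "((\<bar>t\<bar> - c) * norm y)\<^sup>2 \<le> (norm (t *\<^sub>R y + r))\<^sup>2"
      using c by (intro power_mono) auto
    moreover have "(\<bar>t\<bar> - c)\<^sup>2 / 2 * ((norm y)\<^sup>2 + (norm z)\<^sup>2) \<le> (\<bar>t\<bar> - c)\<^sup>2 / 2 * (2 * (norm y)\<^sup>2)"
      using that by (intro mult_left_mono) (auto intro: power_mono)
    ultimately show ?thesis by (simp add: power_mult_distrib)
  qed
  show ?thesis
  proof (cases "norm b \<le> norm a")
    case True
    then show ?thesis using larger[OF p True] zero_le_power2[of "norm (q + t *\<^sub>R b)"] by linarith
  next
    case False
    then have "(\<bar>t\<bar> - c)\<^sup>2 / 2 * ((norm b)\<^sup>2 + (norm a)\<^sup>2) \<le> (norm (t *\<^sub>R b + q))\<^sup>2"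
      by (intro larger[OF q]) simp
    then have "(\<bar>t\<bar> - c)\<^sup>2 / 2 * ((norm a)\<^sup>2 + (norm b)\<^sup>2) \<le> (norm (q + t *\<^sub>R b))\<^sup>2"
      by (simp only: add.commute)
    then show ?thesis using zero_le_power2[of "norm (t *\<^sub>R a + p)"] by linarith
  qed
qed

lemma Sigma_op_Pair [simp]:
  "Sigma_op V1 V2 (a, b) = (orth_proj V1 (a + b), orth_proj V2 (a + b))"
  by (simp add: Sigma_op_def)

context
  fixes V1 V2 :: "'a::{real_inner, complete_space} set"
  assumes V: "subspace V1" "closed V1" "subspace V2" "closed V2"
begin

lemma Sigma_op_dsum: "Sigma_op V1 V2 ` dsum V1 V2 \<subseteq> dsum V1 V2"
  using orth_proj_in[OF V(1,2)] orth_proj_in[OF V(3,4)] by (auto simp: dsum_def)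

lemma inner_Sigma_op:
  assumes "b \<in> dsum V1 V2"
  shows "inner (Sigma_op V1 V2 a) b = inner (fst a + snd a) (fst b + snd b)"
  using assms orth_proj_inner[OF V(1,2)] orth_proj_inner[OF V(3,4)]
  by (cases a, cases b) (auto simp: dsum_def inner_add_right)

lemma Sigma_op_selfadjoint:
  "a \<in> dsum V1 V2 \<Longrightarrow> b \<in> dsum V1 V2 \<Longrightarrow>
    inner (Sigma_op V1 V2 a) b = inner a (Sigma_op V1 V2 b)"
  using inner_Sigma_op[of a b] inner_Sigma_op[of b a] by (simp add: inner_commute)

lemma bounded_linear_Sigma_op: "bounded_linear (Sigma_op V1 V2)"
proof -
  have sum: "bounded_linear (\<lambda>x::'a \<times> 'a. fst x + snd x)"
    by (intro bounded_linear_add bounded_linear_fst bounded_linear_snd)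
  have "Sigma_op V1 V2 = (\<lambda>x. (orth_proj V1 (fst x + snd x), orth_proj V2 (fst x + snd x)))"
    by (auto simp: Sigma_op_def)
  then show ?thesis
    using bounded_linear_compose[OF bounded_linear_orth_proj sum] V
    by (simp add: bounded_linear_Pair)
qed

lemma norm_Sigma_op_minus_scaleR_power2:
  assumes m: "m1 \<in> V1 \<inter> V2" "m2 \<in> V1 \<inter> V2"
    and w: "w1 \<in> V1" "w2 \<in> V2" "\<forall>m\<in>V1 \<inter> V2. inner w1 m = 0" "\<forall>m\<in>V1 \<inter> V2. inner w2 m = 0"
  shows "(norm (Sigma_op V1 V2 (m1 + w1, m2 + w2) - (1 - t) *\<^sub>R (m1 + w1, m2 + w2)))\<^sup>2
    = (norm (t *\<^sub>R m1 + m2))\<^sup>2 + (norm (m1 + t *\<^sub>R m2))\<^sup>2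
      + (norm (t *\<^sub>R w1 + orth_proj V1 w2))\<^sup>2 + (norm (orth_proj V2 w1 + t *\<^sub>R w2))\<^sup>2"
proof -
  have M: "subspace (V1 \<inter> V2)" using V by (simp add: subspace_inter)
  have P1: "orth_proj V1 (m1 + w1 + (m2 + w2)) = m1 + w1 + m2 + orth_proj V1 w2"
    using m w(1) by (simp add: orth_proj_add[OF V(1,2)] orth_proj_id[OF V(1,2)])
  have P2: "orth_proj V2 (m1 + w1 + (m2 + w2)) = m1 + orth_proj V2 w1 + m2 + w2"
    using m w(2) by (simp add: orth_proj_add[OF V(3,4)] orth_proj_id[OF V(3,4)])
  have "t *\<^sub>R m1 + m2 \<in> V1 \<inter> V2" "m1 + t *\<^sub>R m2 \<in> V1 \<inter> V2"
    using M m by (meson subspace_add subspace_scale)+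
  moreover have "\<forall>m\<in>V1 \<inter> V2. inner (t *\<^sub>R w1 + orth_proj V1 w2) m = 0"
    "\<forall>m\<in>V1 \<inter> V2. inner (orth_proj V2 w1 + t *\<^sub>R w2) m = 0"
    using w orth_proj_orthogonal_complement[OF V(1,2) w(4)] orth_proj_orthogonal_complement[OF V(3,4) w(3)]
    by (auto simp: inner_add_left)
  ultimately have "inner (t *\<^sub>R m1 + m2) (t *\<^sub>R w1 + orth_proj V1 w2) = 0"
    "inner (m1 + t *\<^sub>R m2) (orth_proj V2 w1 + t *\<^sub>R w2) = 0"
    by (auto simp: inner_commute)
  moreover have "Sigma_op V1 V2 (m1 + w1, m2 + w2) - (1 - t) *\<^sub>R (m1 + w1, m2 + w2)
      = ((t *\<^sub>R m1 + m2) + (t *\<^sub>R w1 + orth_proj V1 w2), (m1 + t *\<^sub>R m2) + (orth_proj V2 w1 + t *\<^sub>R w2))"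
    unfolding Sigma_op_Pair P1 P2 by (simp add: algebra_simps)
  ultimately show ?thesis by (simp add: norm_Pair pythagoras)
qed

lemma Sigma_op_bounded_below:
  assumes ne: "friedrichs_cosines V1 V2 \<noteq> {}"
    and l: "friedrichs_cos V1 V2 < \<bar>1 - l\<bar>" "\<bar>1 - l\<bar> \<noteq> 1"
  obtains C where "\<And>x. x \<in> dsum V1 V2 \<Longrightarrow> norm x \<le> C * norm (Sigma_op V1 V2 x - l *\<^sub>R x)"
proof -
  define c where "c = friedrichs_cos V1 V2"
  define t where "t = 1 - l"
  define \<delta> where "\<delta> = min ((\<bar>t\<bar> - 1)\<^sup>2) ((\<bar>t\<bar> - c)\<^sup>2 / 2)"
  have c: "0 \<le> c" "c < \<bar>t\<bar>" using friedrichs_cos_bounds(1)[OF ne] l(1) by (simp_all add: c_def t_def)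
  have "\<delta> > 0" using l c by (auto simp: \<delta>_def t_def)
  have M: "subspace (V1 \<inter> V2)" "closed (V1 \<inter> V2)" using V by (auto simp: subspace_inter)
  have lower: "\<delta> * (norm x)\<^sup>2 \<le> (norm (Sigma_op V1 V2 x - l *\<^sub>R x))\<^sup>2"
    if xD: "x \<in> dsum V1 V2" for x
  proof -
    obtain v1 v2 where x: "x = (v1, v2)" "v1 \<in> V1" "v2 \<in> V2" using xD by (auto simp: dsum_def)
    define m1 where "m1 = orth_proj (V1 \<inter> V2) v1"
    define m2 where "m2 = orth_proj (V1 \<inter> V2) v2"
    define w1 where "w1 = v1 - m1"
    define w2 where "w2 = v2 - m2"
    have m: "m1 \<in> V1 \<inter> V2" "m2 \<in> V1 \<inter> V2" using orth_proj_in[OF M] by (simp_all add: m1_def m2_def)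
    have w: "w1 \<in> V1" "w2 \<in> V2" using x m V by (auto simp: w1_def w2_def subspace_diff)
    have w_perp: "\<forall>m\<in>V1 \<inter> V2. inner w1 m = 0" "\<forall>m\<in>V1 \<inter> V2. inner w2 m = 0"
      using orth_proj_inner[OF M] by (simp_all add: w1_def w2_def m1_def m2_def inner_diff_left)
    have v: "v1 = m1 + w1" "v2 = m2 + w2" by (simp_all add: w1_def w2_def)
    have norm_x: "(norm x)\<^sup>2 = ((norm m1)\<^sup>2 + (norm m2)\<^sup>2) + ((norm w1)\<^sup>2 + (norm w2)\<^sup>2)"
      using pythagoras[of m1 w1] pythagoras[of m2 w2] m w_perp
      by (simp add: x(1) v norm_Pair inner_commute)
    have "norm (orth_proj V1 w2) \<le> c * norm w2"
      unfolding c_def by (rule norm_orth_proj_le_friedrichs_cos[OF V(1,2,3) ne w(2) w_perp(2)])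
    moreover have "norm (orth_proj V2 w1) \<le> c * norm w1"
      unfolding c_def by (rule norm_orth_proj_le_friedrichs_cos'[OF V(1,3,4) ne w(1) w_perp(1)])
    ultimately have "(\<bar>t\<bar> - c)\<^sup>2 / 2 * ((norm w1)\<^sup>2 + (norm w2)\<^sup>2)
        \<le> (norm (t *\<^sub>R w1 + orth_proj V1 w2))\<^sup>2 + (norm (orth_proj V2 w1 + t *\<^sub>R w2))\<^sup>2"
      using c by (rule norm_scaleR_add_perturbed_power2_ge)
    moreover have "(\<bar>t\<bar> - 1)\<^sup>2 * ((norm m1)\<^sup>2 + (norm m2)\<^sup>2)
        \<le> (norm (t *\<^sub>R m1 + m2))\<^sup>2 + (norm (m1 + t *\<^sub>R m2))\<^sup>2"
      by (rule norm_scaleR_add_swap_power2_ge)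
    moreover have "\<delta> * (norm x)\<^sup>2 \<le> (\<bar>t\<bar> - 1)\<^sup>2 * ((norm m1)\<^sup>2 + (norm m2)\<^sup>2)
        + (\<bar>t\<bar> - c)\<^sup>2 / 2 * ((norm w1)\<^sup>2 + (norm w2)\<^sup>2)"
      unfolding norm_x distrib_left by (intro add_mono mult_right_mono) (auto simp: \<delta>_def)
    ultimately show ?thesis
      using norm_Sigma_op_minus_scaleR_power2[OF m w w_perp, of t] by (simp add: x(1) v t_def)
  qed
  show thesis
  proof (rule that[of "1 / sqrt \<delta>"])
    fix x assume "x \<in> dsum V1 V2"
    then have "sqrt (\<delta> * (norm x)\<^sup>2) \<le> sqrt ((norm (Sigma_op V1 V2 x - l *\<^sub>R x))\<^sup>2)"
      using lower real_sqrt_le_mono by blast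
    then show "norm x \<le> 1 / sqrt \<delta> * norm (Sigma_op V1 V2 x - l *\<^sub>R x)"
      using \<open>\<delta> > 0\<close> by (simp add: real_sqrt_mult field_simps)
  qed
qed

text \<open>If \<open>P\<^sub>2 u\<close> were exactly \<open>c\<^sup>2 w\<close> for \<open>u = P\<^sub>1 w\<close>, the vector \<open>(u, s c w)\<close> would be an
  eigenvector of \<open>\<Sigma>\<close> with eigenvalue \<open>1 + s c\<close>; the defect is controlled by how far \<open>\<parallel>u\<parallel>\<close> is
  from its maximal value \<open>c\<close>.\<close>
lemma Sigma_op_approx_eigenvector:
  assumes ne: "friedrichs_cosines V1 V2 \<noteq> {}" and s: "\<bar>s\<bar> = 1"
    and w: "w \<in> V2" "norm w = 1" "\<forall>m\<in>V1 \<inter> V2. inner w m = 0"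
  defines "c \<equiv> friedrichs_cos V1 V2" and "u \<equiv> orth_proj V1 w"
  shows "(norm (Sigma_op V1 V2 (u, (s * c) *\<^sub>R w) - (1 + s * c) *\<^sub>R (u, (s * c) *\<^sub>R w)))\<^sup>2
    \<le> c\<^sup>2 * (c\<^sup>2 - (norm u)\<^sup>2)"
proof -
  have u: "u \<in> V1" "\<forall>m\<in>V1 \<inter> V2. inner u m = 0"
    using orth_proj_in[OF V(1,2)] orth_proj_orthogonal_complement[OF V(1,2) w(3)] by (auto simp: u_def)
  have "(1 + s * c) * (s * c) = s * c + (s * s) * c\<^sup>2" by (simp add: power2_eq_square algebra_simps)
  also have "s * s = 1" using s abs_mult_self_eq[of s] by simp
  finally have "(1 + s * c) *\<^sub>R (s * c) *\<^sub>R w = (s * c) *\<^sub>R w + c\<^sup>2 *\<^sub>R w"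
    by (simp only: scaleR_scaleR scaleR_add_left mult_1)
  moreover have "orth_proj V1 (u + (s * c) *\<^sub>R w) = (1 + s * c) *\<^sub>R u"
    using u(1) by (simp add: orth_proj_add orth_proj_scaleR orth_proj_id V u_def[symmetric]
        scaleR_add_left)
  moreover have "orth_proj V2 (u + (s * c) *\<^sub>R w) = orth_proj V2 u + (s * c) *\<^sub>R w"
    using w(1) by (simp add: orth_proj_add orth_proj_scaleR orth_proj_id V)
  ultimately have diff: "Sigma_op V1 V2 (u, (s * c) *\<^sub>R w) - (1 + s * c) *\<^sub>R (u, (s * c) *\<^sub>R w)
      = (0, orth_proj V2 u - c\<^sup>2 *\<^sub>R w)"
    by simp
  have "inner (orth_proj V2 u) w = (norm u)\<^sup>2"
    using orth_proj_inner[OF V(3,4) w(1)] norm_orth_proj_power2[OF V(1,2)] by (simp add: u_def)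
  have "(norm (Sigma_op V1 V2 (u, (s * c) *\<^sub>R w) - (1 + s * c) *\<^sub>R (u, (s * c) *\<^sub>R w)))\<^sup>2
      = (norm (orth_proj V2 u - c\<^sup>2 *\<^sub>R w))\<^sup>2"
    unfolding diff by (simp add: norm_Pair)
  also have "\<dots> = (norm (orth_proj V2 u))\<^sup>2 - 2 * c\<^sup>2 * (norm u)\<^sup>2 + (c\<^sup>2)\<^sup>2"
    using \<open>inner (orth_proj V2 u) w = (norm u)\<^sup>2\<close> w(2) by (simp add: norm_diff_scaleR_power2)
  also have "norm (orth_proj V2 u) \<le> c * norm u"
    unfolding c_def by (rule norm_orth_proj_le_friedrichs_cos'[OF V(1,3,4) ne u])
  then have "(norm (orth_proj V2 u))\<^sup>2 \<le> c\<^sup>2 * (norm u)\<^sup>2"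
    by (metis norm_ge_zero power_mono power_mult_distrib)
  then have "(norm (orth_proj V2 u))\<^sup>2 - 2 * c\<^sup>2 * (norm u)\<^sup>2 + (c\<^sup>2)\<^sup>2 \<le> c\<^sup>2 * (c\<^sup>2 - (norm u)\<^sup>2)"
    by (simp add: power2_eq_square algebra_simps)
  finally show ?thesis .
qed

lemma one_plus_friedrichs_cos_in_op_spectrum:
  assumes ne: "friedrichs_cosines V1 V2 \<noteq> {}" and s: "\<bar>s\<bar> = 1"
  shows "1 + s * friedrichs_cos V1 V2 \<in> op_spectrum (dsum V1 V2) (Sigma_op V1 V2)"
proof (rule in_op_spectrumI)
  fix e :: real assume "e > 0"
  define c where "c = friedrichs_cos V1 V2"
  have ne': "friedrichs_cosines V2 V1 \<noteq> {}" using ne by (simp add: friedrichs_cosines_commute)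
  show "\<exists>x\<in>dsum V1 V2. norm (Sigma_op V1 V2 x - (1 + s * c) *\<^sub>R x) < e * norm x"
  proof (cases "c = 0")
    case True
    obtain v where v: "v \<in> V1" "norm v = 1" "\<forall>m\<in>V1 \<inter> V2. inner v m = 0"
      using friedrichs_cos_approx[OF V(3,4) ne' zero_less_one] by (metis Int_commute)
    have "norm (orth_proj V2 v) \<le> c * norm v"
      unfolding c_def by (rule norm_orth_proj_le_friedrichs_cos'[OF V(1,3,4) ne v(1,3)])
    then have "Sigma_op V1 V2 (v, 0) - (1 + s * c) *\<^sub>R (v, 0) = 0"
      using True v(1) by (simp add: orth_proj_id[OF V(1,2)] zero_prod_def)
    then show ?thesis
      using v V(3) \<open>e > 0\<close> by (intro bexI[of _ "(v, 0)"]) (auto simp: dsum_def subspace_0 norm_Pair)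
  next
    case False
    then have "c > 0" using friedrichs_cos_bounds(1)[OF ne] by (simp add: c_def)
    obtain w where w: "w \<in> V2" "norm w = 1" "\<forall>m\<in>V1 \<inter> V2. inner w m = 0"
      and close: "c - e\<^sup>2 / (2 * c) < norm (orth_proj V1 w)"
      using friedrichs_cos_approx[OF V(1,2) ne, of "e\<^sup>2 / (2 * c)"] \<open>c > 0\<close> \<open>e > 0\<close>
      by (auto simp: c_def)
    define u where "u = orth_proj V1 w"
    define x where "x = (u, (s * c) *\<^sub>R w)"
    have "c\<^sup>2 - (norm u)\<^sup>2 \<le> 2 * c * (c - norm u)"
      using zero_le_power2[of "c - norm u"] by (simp add: power2_eq_square algebra_simps)
    also have "\<dots> < e\<^sup>2" using close \<open>c > 0\<close> by (simp add: u_def field_simps)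
    finally have "c\<^sup>2 * (c\<^sup>2 - (norm u)\<^sup>2) < c\<^sup>2 * e\<^sup>2" using \<open>c > 0\<close> by simp
    moreover have "c \<le> norm x"
      using norm_snd_le[of "(s * c) *\<^sub>R w" u] s w(2) \<open>c > 0\<close> by (simp add: x_def abs_mult)
    then have "c\<^sup>2 * e\<^sup>2 \<le> (norm x)\<^sup>2 * e\<^sup>2"
      using \<open>c > 0\<close> by (intro mult_right_mono power_mono) auto
    then have "c\<^sup>2 * e\<^sup>2 \<le> (e * norm x)\<^sup>2" by (simp add: power_mult_distrib mult.commute)
    ultimately have "(norm (Sigma_op V1 V2 x - (1 + s * c) *\<^sub>R x))\<^sup>2 < (e * norm x)\<^sup>2"
      using Sigma_op_approx_eigenvector[OF ne s w] by (simp add: x_def u_def c_def)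
    then have "norm (Sigma_op V1 V2 x - (1 + s * c) *\<^sub>R x) < e * norm x"
      by (rule power2_less_imp_less) (use \<open>e > 0\<close> in simp)
    moreover have "x \<in> dsum V1 V2"
      using orth_proj_in[OF V(1,2)] w(1) V(3) by (simp add: x_def u_def dsum_def subspace_scale)
    ultimately show ?thesis by blast
  qed
qed

end

theorem lemma3p12:
  fixes V1 V2 :: "'a::{real_inner, complete_space} set"
  assumes "subspace V1" "closed V1" "subspace V2" "closed V2"
    and "\<not> V1 \<subseteq> V2" "\<not> V2 \<subseteq> V1"
  shows "op_spectrum (dsum V1 V2) (Sigma_op V1 V2) \<subseteq>
           {1 - cos (friedrichs_angle V1 V2) .. 1 + cos (friedrichs_angle V1 V2)} \<union> {0, 2}
         \<and> 1 - cos (friedrichs_angle V1 V2) \<in> op_spectrum (dsum V1 V2) (Sigma_op V1 V2)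
         \<and> 1 + cos (friedrichs_angle V1 V2) \<in> op_spectrum (dsum V1 V2) (Sigma_op V1 V2)"
proof -
  note V = assms(1-4)
  have ne: "friedrichs_cosines V1 V2 \<noteq> {}" by (rule friedrichs_cosines_nonempty[OF assms])
  have D: "subspace (dsum V1 V2)" "closed (dsum V1 V2)"
    using V by (simp_all add: dsum_def subspace_Times closed_Times)
  have "l \<notin> op_spectrum (dsum V1 V2) (Sigma_op V1 V2)"
    if "l \<notin> {1 - friedrichs_cos V1 V2 .. 1 + friedrichs_cos V1 V2} \<union> {0, 2}" for l
  proof -
    have "friedrichs_cos V1 V2 < \<bar>1 - l\<bar>" "\<bar>1 - l\<bar> \<noteq> 1" using that by auto
    then obtain C where "\<And>x. x \<in> dsum V1 V2 \<Longrightarrow> norm x \<le> C * norm (Sigma_op V1 V2 x - l *\<^sub>R x)"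
      using Sigma_op_bounded_below[OF V ne] by blast
    then show ?thesis
      by (intro not_in_op_spectrumI[OF D bounded_linear_Sigma_op[OF V] Sigma_op_dsum[OF V]])
        (simp_all add: Sigma_op_selfadjoint[OF V])
  qed
  then have "op_spectrum (dsum V1 V2) (Sigma_op V1 V2)
      \<subseteq> {1 - friedrichs_cos V1 V2 .. 1 + friedrichs_cos V1 V2} \<union> {0, 2}"
    by blast
  then show ?thesis
    using one_plus_friedrichs_cos_in_op_spectrum[OF V ne, of 1]
      one_plus_friedrichs_cos_in_op_spectrum[OF V ne, of "-1"]
    unfolding cos_friedrichs_angle[OF ne] by simp
qed

end
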